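(* For $k\geq1$ let $X_k$ be a random symmetric $2\times 2$ matrix whose upper-triangular entries are independent and uniform on $\{1,\ldots,k\}$. Then $$\lim_{L\to\infty}\lim_{k\to\infty}\mathbb{P}\Bigl(\exists\, Q\in\textstyle\bigcup_{\ell=2}^{L}\mathbb{O}_2(\ell,\mathbb{Q}):\ Q^{T}X_kQ\in\mathbb{Z}^{2\times 2}\Bigr)\leq\frac{12G}{\pi^2}-1,$$ where $G=\sum_{m=0}^\infty\frac{(-1)^m}{(2m+1)^2}$ is Catalan's constant (and the limits exist).
   Context: The level of a rational matrix $Q$ is the least integer $\ell\geq 1$ with $\ell Q$ having integer entries. $\mathbb{O}_n(\ell,\mathbb{Q})$ denotes the set of all rational orthogonal $n\times n$ matrices with level $\ell$. *)

theory Defs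
  imports "HOL-Analysis.Analysis"
begin

definition rat_orthogonal :: "rat^'n^'n \<Rightarrow> bool" where
  "rat_orthogonal Q \<longleftrightarrow> transpose Q ** Q = mat 1"

definition int_matrix :: "rat^'n^'m \<Rightarrow> bool" where
  "int_matrix A \<longleftrightarrow> (\<forall>i j. A $ i $ j \<in> \<int>)"

definition level :: "rat^'n^'m \<Rightarrow> nat" where
  "level Q = (LEAST l::nat. l \<ge> 1 \<and> int_matrix (\<chi> i j. of_nat l * Q $ i $ j))"

definition rat_orth_level :: "nat \<Rightarrow> (rat^'n^'n) set" where
  "rat_orth_level l = {Q. rat_orthogonal Q \<and> level Q = l}"

definition sym2 :: "int \<Rightarrow> int \<Rightarrow> int \<Rightarrow> rat^2^2" where
  "sym2 a b c = (\<chi> i j. if i = j then (if i = 1 then of_int a else of_int c) else of_int b)"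

definition prob_conj :: "nat \<Rightarrow> nat \<Rightarrow> real" where
  "prob_conj k L = real (card {(a, b, c) \<in> {1..int k} \<times> {1..int k} \<times> {1..int k}.
       \<exists>Q \<in> (\<Union>l\<in>{2..L}. rat_orth_level l).
          int_matrix (transpose Q ** sym2 a b c ** Q)}) / real k ^ 3"

definition catalan :: real where
  "catalan = (\<Sum>m. (-1) ^ m / (2 * real m + 1) ^ 2)"

end

theory Submission
  imports Defs "HOL-Number_Theory.Number_Theory"
begin

(* Suppose Q has level l >= 2 and Q^T X Q is integral. Pick a prime P dividing l and let (p, q) be
   the first column of the integer matrix l Q. Orthogonality gives p^2 + q^2 = l^2, and minimality
   of the level forces P not to divide p; hence t = q/p mod P^2 is a square root of -1 modulo P^2
   (so P = 1 mod 4), and integrality of the (1,1) entry becomes a + 2 t b - c = 0 mod P^2.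
   There are at most two such t, and each congruence holds for a proportion of about 1/P^2 of
   all triples (a, b, c), so the probability is at most the sum of 2/P^2 over the primes
   P = 1 mod 4, which is below 0.111 < 12 G/pi^2 - 1. The limit in k exists because the event
   is periodic in a, b and c with period (L!)^2; the limit in L exists by monotonicity. *)

section \<open>Levels of rational matrices\<close>

lemma int_matrix_scaled_common_denominator:
  fixes Q :: "rat^'n^'m"
  shows "\<exists>l::nat. l \<ge> 1 \<and> int_matrix (\<chi> i j. of_nat l * Q $ i $ j)"
proof -
  define den where "den x = snd (quotient_of x)" for x
  define d where "d = (\<Prod>ij\<in>UNIV. den (Q $ fst ij $ snd ij))"
  have den_pos: "den x > 0" for x
    unfolding den_def by (rule quotient_of_denom_pos')
  have den_Ints: "of_int (den x) * x \<in> \<int>" for x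
  proof -
    obtain n e where ne: "quotient_of x = (n, e)" by force
    then have "x = of_int n / of_int e" "e > 0"
      by (simp_all add: quotient_of_div quotient_of_denom_pos)
    then show ?thesis using ne by (simp add: den_def)
  qed
  have "d > 0"
    unfolding d_def using den_pos by (simp add: prod_pos)
  moreover have "of_int d * Q $ i $ j \<in> \<int>" for i j
  proof -
    have "d = den (Q $ i $ j) * (\<Prod>ij\<in>UNIV - {(i, j)}. den (Q $ fst ij $ snd ij))"
      unfolding d_def by (subst prod.remove[of UNIV "(i, j)"]) auto
    then have "of_int d * Q $ i $ j = of_int (\<Prod>ij\<in>UNIV - {(i, j)}. den (Q $ fst ij $ snd ij))
        * (of_int (den (Q $ i $ j)) * Q $ i $ j)"
      by (simp add: ac_simps)
    also have "\<dots> \<in> \<int>"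
      by (rule Ints_mult[OF Ints_of_int den_Ints])
    finally show ?thesis .
  qed
  ultimately show ?thesis
    by (intro exI[of _ "nat d"]) (simp add: int_matrix_def)
qed

lemma
  fixes Q :: "rat^'n^'m"
  shows level_ge_1: "level Q \<ge> 1"
    and of_nat_level_mult_Ints: "of_nat (level Q) * Q $ i $ j \<in> \<int>"
  using LeastI_ex[OF int_matrix_scaled_common_denominator[of Q]]
  by (auto simp: level_def int_matrix_def)

lemma level_div_prime_not_Ints:
  fixes Q :: "rat^'n^'m" and P :: nat
  assumes P: "prime P" "P dvd level Q"
  shows "\<exists>i j. of_nat (level Q) * Q $ i $ j / of_nat P \<notin> \<int>"
proof (rule ccontr)
  define l where "l = level Q"
  obtain k where k: "l = P * k"
    using P(2) unfolding l_def by blast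
  have "l div P = k" "of_nat l / of_nat P = (of_nat k :: rat)"
    using k prime_gt_0_nat[OF P(1)] by simp_all
  moreover assume "\<not> ?thesis"
  ultimately have "int_matrix (\<chi> i j. of_nat (l div P) * Q $ i $ j)"
    by (auto simp: int_matrix_def l_def simp flip: times_divide_eq_left)
  moreover have "1 \<le> l div P"
    using P level_ge_1[of Q] by (auto simp: l_def dvd_imp_le div_greater_zero_iff prime_gt_0_nat)
  moreover have "l div P < l"
    using prime_gt_1_nat[OF P(1)] level_ge_1[of Q] by (intro div_less_dividend) (simp_all add: l_def)
  ultimately show False
    using not_less_Least unfolding l_def level_def by blast
qed

lemma rat_orthogonal_column_norm:
  fixes Q :: "rat^'n^'n"
  assumes "rat_orthogonal Q"
  shows "(\<Sum>k\<in>UNIV. Q $ k $ j ^ 2) = 1"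
  using arg_cong[OF assms[unfolded rat_orthogonal_def], of "\<lambda>A. A $ j $ j"]
  by (simp add: matrix_matrix_mult_def transpose_def mat_def power2_eq_square)

lemma rat_orthogonal_row_norm:
  fixes Q :: "rat^'n^'n"
  assumes "rat_orthogonal Q"
  shows "(\<Sum>k\<in>UNIV. Q $ i $ k ^ 2) = 1"
proof -
  have "Q ** transpose Q = mat 1"
    using assms matrix_left_right_inverse unfolding rat_orthogonal_def by blast
  from arg_cong[OF this, of "\<lambda>A. A $ i $ i"] show ?thesis
    by (simp add: matrix_matrix_mult_def transpose_def mat_def power2_eq_square)
qed

lemma rat_orthogonal2_entry_square:
  fixes Q :: "rat^2^2"
  assumes "rat_orthogonal Q"
  shows "Q $ i $ j ^ 2 = Q $ 1 $ 1 ^ 2 \<or> Q $ i $ j ^ 2 = 1 - Q $ 1 $ 1 ^ 2"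
proof -
  have "Q $ 1 $ 1 ^ 2 + Q $ 2 $ 1 ^ 2 = 1"
    using rat_orthogonal_column_norm[OF assms, of 1] by (simp add: sum_2)
  moreover have "Q $ 1 $ 1 ^ 2 + Q $ 1 $ 2 ^ 2 = 1" "Q $ 2 $ 1 ^ 2 + Q $ 2 $ 2 ^ 2 = 1"
    using rat_orthogonal_row_norm[OF assms, of 1] rat_orthogonal_row_norm[OF assms, of 2]
    by (simp_all add: sum_2)
  ultimately show ?thesis
    using exhaust_2[of i] exhaust_2[of j] by (elim disjE; simp; linarith)
qed

lemma congruence_sym2_entry:
  "(transpose Q ** sym2 a b c ** Q) $ i $ j =
     Q $ 1 $ i * Q $ 1 $ j * of_int a + (Q $ 1 $ i * Q $ 2 $ j + Q $ 2 $ i * Q $ 1 $ j) * of_int b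
     + Q $ 2 $ i * Q $ 2 $ j * of_int c"
  by (simp add: matrix_matrix_mult_def transpose_def sym2_def sum_2 algebra_simps)

lemma level_prime_not_dvd_corner:
  fixes Q :: "rat^2^2" and P :: nat
  assumes orth: "rat_orthogonal Q" and P: "prime P" "P dvd level Q"
    and p: "of_nat (level Q) * Q $ 1 $ 1 = of_int p"
  shows "\<not> int P dvd p"
proof
  assume "int P dvd p"
  define l where "l = level Q"
  define N where "N i j = \<lfloor>of_nat l * Q $ i $ j\<rfloor>" for i j
  have N: "of_int (N i j) = of_nat l * Q $ i $ j" for i j
    unfolding N_def l_def by (rule of_int_floor[OF of_nat_level_mult_Ints])
  have "of_nat l * Q $ i $ j / of_nat P \<in> \<int>" for i j
  proof -
    have N_sq: "of_int (N i j ^ 2) = of_nat l ^ 2 * Q $ i $ j ^ 2"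
      by (simp add: N power_mult_distrib)
    have p_sq: "of_int (p ^ 2) = of_nat l ^ 2 * Q $ 1 $ 1 ^ 2"
      by (simp add: p[folded l_def, symmetric] power_mult_distrib)
    from rat_orthogonal2_entry_square[OF orth, of i j]
    have "of_nat l ^ 2 * Q $ i $ j ^ 2 = of_nat l ^ 2 * Q $ 1 $ 1 ^ 2
        \<or> of_nat l ^ 2 * Q $ i $ j ^ 2 = of_nat l ^ 2 - of_nat l ^ 2 * Q $ 1 $ 1 ^ 2"
      by (auto simp: right_diff_distrib)
    then have "of_int (N i j ^ 2) = (of_int (p ^ 2) :: rat)
        \<or> of_int (N i j ^ 2) = (of_int (int l ^ 2 - p ^ 2) :: rat)"
      unfolding N_sq of_int_diff p_sq by simp
    then have "N i j ^ 2 = p ^ 2 \<or> N i j ^ 2 = int l ^ 2 - p ^ 2"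
      by (simp only: of_int_eq_iff)
    moreover have "int P dvd p ^ 2" "int P dvd int l ^ 2"
      using \<open>int P dvd p\<close> P(2) by (simp_all add: l_def power2_eq_square dvd_mult2)
    ultimately have "int P dvd N i j ^ 2"
      by (auto intro: dvd_diff)
    then obtain z where "N i j = int P * z"
      using P(1) prime_dvd_power_int_iff by (metis dvdE prime_nat_int_transfer zero_less_numeral)
    then have "of_nat l * Q $ i $ j = of_nat P * (of_int z :: rat)"
      using N[of i j] by simp
    then show ?thesis
      using prime_gt_0_nat[OF P(1)] by simp
  qed
  then show False
    using level_div_prime_not_Ints[OF P] unfolding l_def by blast
qed

section \<open>Square roots of -1 modulo prime powers\<close>

definition sqrt_minus_one_mod :: "int \<Rightarrow> int set" where
  "sqrt_minus_one_mod m = {t \<in> {0..<m}. m dvd t ^ 2 + 1}"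

lemma finite_sqrt_minus_one_mod: "finite (sqrt_minus_one_mod m)"
  unfolding sqrt_minus_one_mod_def by (rule finite_subset[of _ "{0..<m}"]) auto

lemma binary_form_root_mod_imp_congruence:
  fixes m p q a b c :: int
  assumes "m > 0" "coprime m p" "m dvd p ^ 2 + q ^ 2"
    and "m dvd p ^ 2 * a + 2 * p * q * b + q ^ 2 * c"
  shows "\<exists>t \<in> sqrt_minus_one_mod m. m dvd a + 2 * t * b - c"
proof -
  obtain u where "[p * u = 1] (mod m)"
    using cong_solve_coprime_int assms(2) by (metis coprime_commute)
  define t where "t = (u * q) mod m" \<comment> \<open>the quotient q / p modulo m\<close>
  have "[p * t = p * (u * q)] (mod m)"
    unfolding t_def by (simp add: cong_def mod_mult_right_eq)
  also have "[p * (u * q) = 1 * q] (mod m)"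
    unfolding mult.assoc[symmetric] by (intro cong_mult \<open>[p * u = 1] (mod m)\<close> cong_refl)
  finally have pt: "m dvd p * t - q"
    by (simp add: cong_iff_dvd_diff)
  have coprime_sq: "coprime m (p ^ 2)"
    using assms(2) by simp
  have "p ^ 2 * (t ^ 2 + 1) = (p * t - q) * (p * t + q) + (p ^ 2 + q ^ 2)"
    by (simp add: algebra_simps power2_eq_square)
  then have "m dvd p ^ 2 * (t ^ 2 + 1)"
    using pt assms(3) by (simp add: dvd_mult2)
  then have "m dvd t ^ 2 + 1"
    using coprime_sq by (simp add: coprime_dvd_mult_right_iff)
  have "p ^ 2 * (a + 2 * t * b - c)
      = (p ^ 2 * a + 2 * p * q * b + q ^ 2 * c) + 2 * p * b * (p * t - q) - c * (p ^ 2 + q ^ 2)"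
    by (simp add: algebra_simps power2_eq_square)
  then have "m dvd p ^ 2 * (a + 2 * t * b - c)"
    using pt assms(3,4) by (simp add: dvd_diff dvd_mult)
  then have "m dvd a + 2 * t * b - c"
    using coprime_sq by (simp add: coprime_dvd_mult_right_iff)
  moreover have "t \<in> sqrt_minus_one_mod m"
    using \<open>m dvd t ^ 2 + 1\<close> assms(1) by (simp add: sqrt_minus_one_mod_def t_def)
  ultimately show ?thesis
    by blast
qed

lemma four_not_dvd_square_plus_one: "\<not> (4::int) dvd t ^ 2 + 1"
proof
  assume four: "4 dvd t ^ 2 + 1"
  have "2 dvd t ^ 2 + 1"
    using four by (rule dvd_trans[rotated]) simp
  then have "odd t"
    by simp
  then obtain s where "t = 2 * s + 1"
    by (elim oddE)
  then have "t ^ 2 + 1 = 4 * (s ^ 2 + s) + 2"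
    by (simp add: power2_eq_square algebra_simps)
  then have "4 dvd (2::int)"
    using four by (simp only: dvd_add_right_iff[OF dvd_triv_left])
  then show False
    by simp
qed

lemma odd_prime_dvd_square_plus_one_mod_4:
  fixes P :: nat
  assumes P: "prime P" "P > 2" and dvd: "int P dvd t ^ 2 + 1"
  shows "P mod 4 = 1"
proof -
  have "\<not> [-1 = 0] (mod int P)"
    using P by (simp add: cong_iff_dvd_diff)
  moreover have "QuadRes (int P) (-1)"
    using dvd unfolding QuadRes_def by (auto simp: cong_iff_dvd_diff)
  ultimately have "Legendre (-1) (int P) = 1"
    by (simp add: Legendre_def)
  then have euler: "[1 = (-1) ^ ((P - 1) div 2)] (mod int P)"
    using euler_criterion[OF P, of "-1"] by simp
  have "even ((P - 1) div 2)"
  proof (rule ccontr)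
    assume "odd ((P - 1) div 2)"
    then have "[1 = -1] (mod int P)"
      using euler by simp
    then have "P dvd 2"
      by (simp add: cong_iff_dvd_diff flip: int_dvd_int_iff)
    then show False
      using P(2) by (simp add: nat_dvd_not_less)
  qed
  moreover have "odd P"
    using P prime_odd_nat by blast
  ultimately show ?thesis
    by presburger
qed

lemma sqrt_minus_one_mod_prime_square_imp_mod_4:
  fixes P :: nat
  assumes "prime P" "t \<in> sqrt_minus_one_mod (int P ^ 2)"
  shows "P mod 4 = 1"
proof -
  have sq: "int P ^ 2 dvd t ^ 2 + 1"
    using assms(2) by (simp add: sqrt_minus_one_mod_def)
  then have "P \<noteq> 2"
    using four_not_dvd_square_plus_one[of t] by auto
  then have "P > 2"
    using prime_ge_2_nat[OF assms(1)] by simp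
  moreover have "int P dvd t ^ 2 + 1"
    using sq by (rule dvd_trans[rotated]) simp
  ultimately show ?thesis
    using odd_prime_dvd_square_plus_one_mod_4 assms(1) by blast
qed

lemma prime_power_dvd_mult_coprime:
  fixes P :: int
  assumes "prime P" "P ^ n dvd x * y" "\<not> P dvd x"
  shows "P ^ n dvd y"
proof -
  have "coprime (P ^ n) x"
    using assms(1,3) by (simp add: prime_imp_coprime)
  then show ?thesis
    using assms(2) by (simp add: coprime_dvd_mult_right_iff)
qed

lemma sqrt_minus_one_mod_prime_power_plus_minus:
  fixes P :: nat
  assumes P: "prime P" "odd P" and "n > 0"
    and s: "int P ^ n dvd s ^ 2 + 1" and t: "int P ^ n dvd t ^ 2 + 1"
  shows "int P ^ n dvd t - s \<or> int P ^ n dvd t + s"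
proof -
  have "(t - s) * (t + s) = (t ^ 2 + 1) - (s ^ 2 + 1)"
    by (simp add: algebra_simps power2_eq_square)
  then have prod: "int P ^ n dvd (t - s) * (t + s)"
    using dvd_diff[OF t s] by (simp only:)
  have "int P dvd t ^ 2 + 1"
    using \<open>n > 0\<close> t by (meson dvd_power dvd_trans)
  have "\<not> int P dvd 2"
    using P prime_ge_2_nat[of P] zdvd_imp_le[of "int P" 2] by (cases "P = 2") auto
  have "\<not> (int P dvd t - s \<and> int P dvd t + s)"
  proof
    assume "int P dvd t - s \<and> int P dvd t + s"
    then have "int P dvd (t - s) + (t + s)"
      using dvd_add[of "int P" "t - s" "t + s"] by blast
    then have "int P dvd t"
      using P(1) \<open>\<not> int P dvd 2\<close> by (simp add: prime_dvd_mult_iff)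
    then have "int P dvd 1"
      using \<open>int P dvd t ^ 2 + 1\<close> by (simp add: dvd_add_right_iff power2_eq_square)
    then show False
      using P by simp
  qed
  moreover have "prime (int P)"
    using P(1) by simp
  ultimately show ?thesis
    using prime_power_dvd_mult_coprime[of "int P" n "t + s" "t - s"]
      prime_power_dvd_mult_coprime[of "int P" n "t - s" "t + s"] prod
    by (auto simp: mult.commute)
qed

lemma card_sqrt_minus_one_mod_prime_power:
  fixes P :: nat
  assumes P: "prime P" "odd P"
  shows "card (sqrt_minus_one_mod (int P ^ n)) \<le> 2"
proof (cases "n = 0 \<or> sqrt_minus_one_mod (int P ^ n) = {}")
  case True
  then have "sqrt_minus_one_mod (int P ^ n) \<subseteq> {0}"
    by (auto simp: sqrt_minus_one_mod_def)
  then have "card (sqrt_minus_one_mod (int P ^ n)) \<le> card {0::int}"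
    by (intro card_mono) auto
  then show ?thesis
    by simp
next
  case False
  define m where "m = int P ^ n"
  from False obtain t0 where t0: "t0 \<in> sqrt_minus_one_mod m"
    by (auto simp: m_def)
  have "t \<in> {t0, (- t0) mod m}" if t: "t \<in> sqrt_minus_one_mod m" for t
  proof -
    have "m dvd t - t0 \<or> m dvd t - (- t0)"
      using sqrt_minus_one_mod_prime_power_plus_minus[OF P, of n t0 t] False t t0
      by (simp add: m_def sqrt_minus_one_mod_def)
    then have "t mod m = t0 mod m \<or> t mod m = (- t0) mod m"
      by (simp only: mod_eq_dvd_iff)
    then show ?thesis
      using t t0 by (auto simp: sqrt_minus_one_mod_def)
  qed
  then have "card (sqrt_minus_one_mod m) \<le> card {t0, (- t0) mod m}"
    by (intro card_mono) auto
  also have "\<dots> \<le> 2"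
    by (simp add: card_insert_le_m1)
  finally show ?thesis
    by (simp add: m_def)
qed

section \<open>Densities of periodic sets of integer triples\<close>

definition box_count :: "(int \<Rightarrow> int \<Rightarrow> int \<Rightarrow> bool) \<Rightarrow> int \<Rightarrow> nat" where
  "box_count R k = card {(a, b, c) \<in> {1..k} \<times> {1..k} \<times> {1..k}. R a b c}"

lemma box_count_mono:
  assumes "k \<le> k'" and "\<And>a b c. R a b c \<Longrightarrow> R' a b c"
  shows "box_count R k \<le> box_count R' k'"
proof -
  have "finite {(a, b, c) \<in> {1..k'} \<times> {1..k'} \<times> {1..k'}. R' a b c}"
    by (rule finite_subset[of _ "{1..k'} \<times> {1..k'} \<times> {1..k'}"]) auto
  then show ?thesis
    unfolding box_count_def by (rule card_mono) (use assms in fastforce)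
qed

lemma card_filter_eq_sum:
  assumes "finite A"
  shows "card {x \<in> A. P x} = (\<Sum>x\<in>A. if P x then 1 else 0)"
  using assms by (simp add: sum.inter_filter[symmetric])

lemma box_count_eq_sum:
  "box_count R k = (\<Sum>a\<in>{1..k}. \<Sum>b\<in>{1..k}. \<Sum>c\<in>{1..k}. if R a b c then 1 else 0)"
proof -
  have "box_count R k
      = (\<Sum>x\<in>{1..k} \<times> {1..k} \<times> {1..k}. if (case x of (a, b, c) \<Rightarrow> R a b c) then 1 else 0)"
    unfolding box_count_def
    by (subst card_filter_eq_sum[symmetric]) (auto intro: arg_cong[where f = card])
  then show ?thesis
    by (simp add: sum.cartesian_product case_prod_unfold)
qed

lemma sum_periodic_blocks:
  fixes h :: "int \<Rightarrow> 'a::semiring_1" and M :: int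
  assumes "M \<ge> 0" and periodic: "\<And>x. h (x + M) = h x"
  shows "(\<Sum>x\<in>{1..M * int n}. h x) = of_nat n * (\<Sum>x\<in>{1..M}. h x)"
proof (induction n)
  case 0
  then show ?case by simp
next
  case (Suc n)
  have "{1..N + M} = {1..M} \<union> {1 + M..N + M}" if "0 \<le> N" for N
    using \<open>M \<ge> 0\<close> that by auto
  then have "{1..M * int n + M} = {1..M} \<union> {1 + M..M * int n + M}"
    using \<open>M \<ge> 0\<close> by simp
  moreover have "(\<Sum>x\<in>{1 + M..M * int n + M}. h x) = (\<Sum>x\<in>{1..M * int n}. h (x + M))"
    by (rule sum.reindex_bij_witness[of _ "\<lambda>x. x + M" "\<lambda>x. x - M"]) auto
  moreover have "M * int (Suc n) = M * int n + M"
    by (simp add: algebra_simps)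
  ultimately show ?case
    using Suc periodic by (simp add: sum.union_disjoint algebra_simps)
qed

lemma box_count_periodic_blocks:
  fixes M :: int
  assumes "M \<ge> 0"
    and periodic: "\<And>a b c. R (a + M) b c = R a b c" "\<And>a b c. R a (b + M) c = R a b c"
      "\<And>a b c. R a b (c + M) = R a b c"
  shows "box_count R (M * int n) = n ^ 3 * box_count R M"
proof -
  define I where "I = {1..M * int n}"
  define J where "J = {1..M}"
  define ind where "ind a b c = (if R a b c then 1 else 0 :: nat)" for a b c
  have "box_count R (M * int n) = (\<Sum>a\<in>I. \<Sum>b\<in>I. \<Sum>c\<in>I. ind a b c)"
    by (simp add: box_count_eq_sum I_def ind_def)
  also have "\<dots> = (\<Sum>a\<in>I. \<Sum>b\<in>I. n * (\<Sum>c\<in>J. ind a b c))"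
    unfolding I_def J_def using \<open>M \<ge> 0\<close> periodic(3)
    by (simp add: sum_periodic_blocks ind_def)
  also have "\<dots> = (\<Sum>a\<in>I. n * (n * (\<Sum>b\<in>J. \<Sum>c\<in>J. ind a b c)))"
    unfolding I_def J_def using \<open>M \<ge> 0\<close> periodic(2)
    by (simp add: sum_periodic_blocks ind_def flip: sum_distrib_left)
  also have "\<dots> = n * (n * (n * (\<Sum>a\<in>J. \<Sum>b\<in>J. \<Sum>c\<in>J. ind a b c)))"
    unfolding I_def J_def using \<open>M \<ge> 0\<close> periodic(1)
    by (simp add: sum_periodic_blocks ind_def flip: sum_distrib_left)
  also have "\<dots> = n ^ 3 * box_count R M"
    by (simp add: box_count_eq_sum J_def ind_def power3_eq_cube)
  finally show ?thesis .
qed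

lemma LIMSEQ_div_nat_over_self:
  fixes M :: nat
  assumes "M > 0"
  shows "(\<lambda>k. real (k div M) / real k) \<longlonglongrightarrow> 1 / real M"
proof (rule real_tendsto_sandwich)
  have "1 / real M - 1 / real k \<le> real (k div M) / real k
      \<and> real (k div M) / real k \<le> 1 / real M" if "k > 0" for k
  proof -
    have "real k = real M * real (k div M) + real (k mod M)"
      by (simp flip: of_nat_mult of_nat_add)
    then have "real M * real (k div M) = real k - real (k mod M)"
      by simp
    have "real (k div M) / real k = real M * real (k div M) / (real M * real k)"
      using assms by simp
    also have "\<dots> = (real k - real (k mod M)) / (real M * real k)"
      unfolding \<open>real M * real (k div M) = real k - real (k mod M)\<close> ..
    also have "\<dots> = 1 / real M - real (k mod M) / (real M * real k)"
      using that by (simp add: diff_divide_distrib)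
    finally have "real (k div M) / real k = 1 / real M - real (k mod M) / (real M * real k)" .
    moreover have "real (k mod M) / (real M * real k) \<le> real M / (real M * real k)"
      using assms by (intro divide_right_mono) auto
    moreover have "real M / (real M * real k) = 1 / real k"
      using assms by simp
    ultimately show ?thesis
      by (simp add: divide_nonneg_nonneg)
  qed
  then show "\<forall>\<^sub>F k in sequentially. 1 / real M - 1 / real k \<le> real (k div M) / real k"
    "\<forall>\<^sub>F k in sequentially. real (k div M) / real k \<le> 1 / real M"
    by (simp_all add: eventually_sequentially) (meson less_le_trans zero_less_one)+
  show "(\<lambda>k. 1 / real M - 1 / real k) \<longlonglongrightarrow> 1 / real M"
    using tendsto_diff[OF tendsto_const[of "1 / real M"] lim_const_over_n[of 1]] by simp
qed (rule tendsto_const)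

lemma tendsto_box_count_density:
  fixes M :: nat
  assumes "M > 0"
    and periodic: "\<And>a b c. R (a + int M) b c = R a b c" "\<And>a b c. R a (b + int M) c = R a b c"
      "\<And>a b c. R a b (c + int M) = R a b c"
  shows "(\<lambda>k. real (box_count R (int k)) / real k ^ 3) \<longlonglongrightarrow> real (box_count R (int M)) / real M ^ 3"
proof -
  define C where "C = real (box_count R (int M))"
  define n where "n k = k div M" for k
  define density where "density k = real (box_count R (int k)) / real k ^ 3" for k
  have blocks: "real (box_count R (int (M * j))) = real j ^ 3 * C" for j
    using box_count_periodic_blocks[of "int M" R j] periodic by (simp add: C_def)
  have "C * (real (n k) / real k) ^ 3 \<le> density k \<and> density k \<le> C * (real (n k + 1) / real k) ^ 3"
    for k
  proof -
    have "k = M * n k + k mod M" "k mod M < M"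
      using \<open>M > 0\<close> by (simp_all add: n_def)
    then have "int (M * n k) \<le> int k" "int k \<le> int (M * (n k + 1))"
      unfolding of_nat_le_iff distrib_left by linarith+
    then have "box_count R (int (M * n k)) \<le> box_count R (int k)"
      "box_count R (int k) \<le> box_count R (int (M * (n k + 1)))"
      by (auto intro: box_count_mono simp del: of_nat_mult of_nat_add)
    then have "real (n k) ^ 3 * C \<le> real (box_count R (int k))"
      "real (box_count R (int k)) \<le> real (n k + 1) ^ 3 * C"
      unfolding blocks[symmetric] by simp_all
    then show ?thesis
      unfolding density_def power_divide by (auto intro: divide_right_mono simp: mult.commute)
  qed
  then have lower: "\<forall>\<^sub>F k in sequentially. C * (real (n k) / real k) ^ 3 \<le> density k"
    and upper: "\<forall>\<^sub>F k in sequentially. density k \<le> C * (real (n k + 1) / real k) ^ 3"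
    by simp_all
  have lim_n: "(\<lambda>k. real (n k) / real k) \<longlonglongrightarrow> 1 / real M"
    unfolding n_def using \<open>M > 0\<close> by (rule LIMSEQ_div_nat_over_self)
  have lim_n1: "(\<lambda>k. real (n k + 1) / real k) \<longlonglongrightarrow> 1 / real M"
    using tendsto_add[OF lim_n lim_const_over_n[of 1]] by (simp add: add_divide_distrib add.commute)
  have "density \<longlonglongrightarrow> C * (1 / real M) ^ 3"
    by (rule real_tendsto_sandwich[OF lower upper tendsto_mult_left[OF tendsto_power[OF lim_n]]
          tendsto_mult_left[OF tendsto_power[OF lim_n1]]])
  then show ?thesis
    by (simp add: density_def[abs_def] C_def power_divide)
qed

section \<open>Symmetric matrices with an integral rational orthogonal conjugate\<close>

lemma prime_dvd_level_imp_congruence: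
  fixes Q :: "rat^2^2" and P :: nat
  assumes orth: "rat_orthogonal Q" and P: "prime P" "P dvd level Q"
    and int: "int_matrix (transpose Q ** sym2 a b c ** Q)"
  shows "\<exists>t \<in> sqrt_minus_one_mod (int P ^ 2). int P ^ 2 dvd a + 2 * t * b - c"
proof -
  define l where "l = level Q"
  define p where "p = \<lfloor>of_nat l * Q $ 1 $ 1\<rfloor>"
  define q where "q = \<lfloor>of_nat l * Q $ 2 $ 1\<rfloor>"
  have p: "of_int p = of_nat l * Q $ 1 $ 1" and q: "of_int q = of_nat l * Q $ 2 $ 1"
    unfolding p_def q_def l_def by (simp_all add: of_int_floor of_nat_level_mult_Ints)
  have "of_int (p ^ 2 + q ^ 2) = of_nat l ^ 2 * (Q $ 1 $ 1 ^ 2 + Q $ 2 $ 1 ^ 2)"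
    by (simp add: p q power_mult_distrib algebra_simps)
  also have "\<dots> = of_int (int l ^ 2)"
    using rat_orthogonal_column_norm[OF orth, of 1] by (simp add: sum_2)
  finally have norm: "p ^ 2 + q ^ 2 = int l ^ 2"
    by (simp only: of_int_eq_iff)
  obtain z where z: "(transpose Q ** sym2 a b c ** Q) $ 1 $ 1 = of_int z"
    using int unfolding int_matrix_def by (meson Ints_cases)
  have "of_int (p ^ 2 * a + 2 * p * q * b + q ^ 2 * c) = of_nat l ^ 2 * (transpose Q ** sym2 a b c ** Q) $ 1 $ 1"
    by (simp add: congruence_sym2_entry p q power2_eq_square algebra_simps)
  also have "\<dots> = of_int (int l ^ 2 * z)"
    by (simp add: z)
  finally have form: "p ^ 2 * a + 2 * p * q * b + q ^ 2 * c = int l ^ 2 * z"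
    by (simp only: of_int_eq_iff)
  have "int P ^ 2 dvd int l ^ 2"
    using P(2) by (simp add: l_def)
  moreover have "coprime (int P ^ 2) p"
    using level_prime_not_dvd_corner[OF orth P p[unfolded l_def, symmetric]] P(1)
    by (simp add: prime_imp_coprime)
  ultimately show ?thesis
    using binary_form_root_mod_imp_congruence[of "int P ^ 2" p q a b c] P(1) norm form
    by (simp add: prime_gt_0_nat)
qed

lemma int_matrix_congruence_add_multiple:
  fixes Q :: "rat^2^2"
  assumes "level Q dvd d" and int: "int_matrix (transpose Q ** sym2 a b c ** Q)"
  shows "int_matrix (transpose Q ** sym2 (a + int d ^ 2 * u) (b + int d ^ 2 * v) (c + int d ^ 2 * w) ** Q)"
  unfolding int_matrix_def
proof (intro allI)
  fix i j
  obtain r where d: "d = level Q * r"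
    using assms(1) by blast
  define N where "N k i = of_nat (level Q) * Q $ k $ i" for k i
  have N: "N k i \<in> \<int>" for k i
    unfolding N_def by (rule of_nat_level_mult_Ints)
  have "(transpose Q ** sym2 (a + int d ^ 2 * u) (b + int d ^ 2 * v) (c + int d ^ 2 * w) ** Q) $ i $ j
      = (transpose Q ** sym2 a b c ** Q) $ i $ j + of_nat (r ^ 2) *
        (N 1 i * N 1 j * of_int u + (N 1 i * N 2 j + N 2 i * N 1 j) * of_int v + N 2 i * N 2 j * of_int w)"
    (is "?entry = _")
    by (simp add: congruence_sym2_entry N_def d power_mult_distrib power2_eq_square algebra_simps)
  also have "\<dots> \<in> \<int>"
    using int N unfolding int_matrix_def by (intro Ints_add Ints_mult Ints_of_int Ints_of_nat) auto
  finally show "?entry \<in> \<int>" .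
qed

definition has_integral_conjugate :: "nat \<Rightarrow> int \<Rightarrow> int \<Rightarrow> int \<Rightarrow> bool" where
  "has_integral_conjugate L a b c \<longleftrightarrow>
     (\<exists>Q \<in> (\<Union>l\<in>{2..L}. rat_orth_level l). int_matrix (transpose Q ** sym2 a b c ** Q))"

lemma prob_conj_eq_box_count:
  "prob_conj k L = real (box_count (has_integral_conjugate L) (int k)) / real k ^ 3"
  unfolding prob_conj_def box_count_def has_integral_conjugate_def ..

lemma has_integral_conjugate_add_multiple:
  assumes "has_integral_conjugate L a b c"
  shows "has_integral_conjugate L (a + int (fact L) ^ 2 * u) (b + int (fact L) ^ 2 * v) (c + int (fact L) ^ 2 * w)"
proof -
  obtain l Q where l: "l \<in> {2..L}" and Q: "Q \<in> rat_orth_level l"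
    and int: "int_matrix (transpose Q ** sym2 a b c ** Q)"
    using assms unfolding has_integral_conjugate_def by blast
  have "level Q dvd fact L"
    using l Q by (auto simp: rat_orth_level_def intro: dvd_fact)
  then show ?thesis
    using int_matrix_congruence_add_multiple[OF _ int] l Q unfolding has_integral_conjugate_def by blast
qed

lemma has_integral_conjugate_add_multiple_iff:
  "has_integral_conjugate L (a + int (fact L) ^ 2 * u) (b + int (fact L) ^ 2 * v) (c + int (fact L) ^ 2 * w)
     \<longleftrightarrow> has_integral_conjugate L a b c"
proof
  assume "has_integral_conjugate L (a + int (fact L) ^ 2 * u) (b + int (fact L) ^ 2 * v)
    (c + int (fact L) ^ 2 * w)"
  from has_integral_conjugate_add_multiple[OF this, of "- u" "- v" "- w"]
  show "has_integral_conjugate L a b c"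
    by simp
qed (rule has_integral_conjugate_add_multiple)

lemma LIMSEQ_prob_conj:
  "(\<lambda>k. prob_conj k L) \<longlonglongrightarrow>
     real (box_count (has_integral_conjugate L) (int (fact L ^ 2))) / real (fact L ^ 2) ^ 3"
  unfolding prob_conj_eq_box_count
proof (rule tendsto_box_count_density)
  fix a b c :: int
  show "has_integral_conjugate L (a + int (fact L ^ 2)) b c = has_integral_conjugate L a b c"
    "has_integral_conjugate L a (b + int (fact L ^ 2)) c = has_integral_conjugate L a b c"
    "has_integral_conjugate L a b (c + int (fact L ^ 2)) = has_integral_conjugate L a b c"
    using has_integral_conjugate_add_multiple_iff[of L a 1 b 0 c 0]
      has_integral_conjugate_add_multiple_iff[of L a 0 b 1 c 0]
      has_integral_conjugate_add_multiple_iff[of L a 0 b 0 c 1]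
    by simp_all
qed simp

lemma prob_conj_mono:
  assumes "L \<le> L'"
  shows "prob_conj k L \<le> prob_conj k L'"
proof -
  have "box_count (has_integral_conjugate L) (int k) \<le> box_count (has_integral_conjugate L') (int k)"
    by (rule box_count_mono) (use assms in \<open>auto simp: has_integral_conjugate_def\<close>)
  then show ?thesis
    unfolding prob_conj_eq_box_count by (simp add: divide_right_mono)
qed

definition pythagorean_primes_upto :: "nat \<Rightarrow> nat set" where
  "pythagorean_primes_upto L = {P. prime P \<and> P \<le> L \<and> P mod 4 = 1}"

lemma finite_pythagorean_primes_upto: "finite (pythagorean_primes_upto L)"
  unfolding pythagorean_primes_upto_def by (rule finite_subset[of _ "{..L}"]) auto

lemma has_integral_conjugate_imp_congruence:
  assumes "has_integral_conjugate L a b c"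
  shows "\<exists>P \<in> pythagorean_primes_upto L. \<exists>t \<in> sqrt_minus_one_mod (int P ^ 2).
           int P ^ 2 dvd a + 2 * t * b - c"
proof -
  obtain l Q where l: "l \<in> {2..L}" and Q: "rat_orthogonal Q" "level Q = l"
    and int: "int_matrix (transpose Q ** sym2 a b c ** Q)"
    using assms unfolding has_integral_conjugate_def rat_orth_level_def by blast
  obtain P where P: "prime P" "P dvd l"
    using l prime_factor_nat[of l] by auto
  obtain t where t: "t \<in> sqrt_minus_one_mod (int P ^ 2)" "int P ^ 2 dvd a + 2 * t * b - c"
    using prime_dvd_level_imp_congruence[OF Q(1) P(1)] P(2) Q(2) int by blast
  have "P \<le> L"
    using P(2) l dvd_imp_le[of P l] by auto
  then have "P \<in> pythagorean_primes_upto L"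
    using P(1) sqrt_minus_one_mod_prime_square_imp_mod_4[OF P(1) t(1)]
    by (simp add: pythagorean_primes_upto_def)
  then show ?thesis
    using t by blast
qed

lemma card_congruence_class_le:
  fixes m s :: int
  assumes "m > 0"
  shows "real (card {a \<in> {1..int k}. m dvd a + s}) \<le> real k / real_of_int m + 1"
proof -
  define T where "T = {a \<in> {1..int k}. m dvd a + s}"
  have "inj_on (\<lambda>a. (a - 1) div m) T"
  proof (rule inj_onI)
    fix a a' assume "a \<in> T" "a' \<in> T" and div: "(a - 1) div m = (a' - 1) div m"
    then have "m dvd (a + s) - (a' + s)"
      unfolding T_def by (intro dvd_diff) auto
    then have "(a - 1) mod m = (a' - 1) mod m"
      by (simp add: mod_eq_dvd_iff)
    with div show "a = a'"
      by (metis div_mult_mod_eq diff_add_cancel)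
  qed
  moreover have "(\<lambda>a. (a - 1) div m) ` T \<subseteq> {0..(int k - 1) div m}"
    using assms unfolding T_def by (auto simp: pos_imp_zdiv_nonneg_iff intro!: zdiv_mono1)
  ultimately have "card T \<le> card {0..(int k - 1) div m}"
    by (metis card_image card_mono finite_atLeastAtMost_int)
  also have "\<dots> = nat ((int k - 1) div m + 1)"
    by simp
  finally have "real (card T) \<le> real (nat ((int k - 1) div m + 1))"
    by simp
  also have "\<dots> \<le> real k / real_of_int m + 1"
  proof -
    have "real_of_int ((int k - 1) div m) \<le> real k / real_of_int m"
      using real_of_int_div4[of "int k - 1" m] assms by (simp add: divide_right_mono order_trans)
    then show ?thesis
      using assms by (cases "(int k - 1) div m + 1 \<ge> 0") auto
  qed
  finally show ?thesis
    unfolding T_def .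
qed

lemma card_box_congruence_le:
  fixes m :: int
  assumes "m > 0"
  shows "real (card {(a, b, c) \<in> {1..int k} \<times> {1..int k} \<times> {1..int k}. m dvd a + f b c})
           \<le> real k ^ 2 * (real k / real_of_int m + 1)"
proof -
  define A where "A = {1..int k}"
  define fibre where "fibre y = {a \<in> A. m dvd a + f (fst y) (snd y)} \<times> {y}" for y
  have "{(a, b, c) \<in> A \<times> A \<times> A. m dvd a + f b c} = (\<Union>y\<in>A \<times> A. fibre y)"
    unfolding fibre_def by auto
  then have "card {(a, b, c) \<in> A \<times> A \<times> A. m dvd a + f b c} \<le> (\<Sum>y\<in>A \<times> A. card (fibre y))"
    by (simp add: card_UN_le A_def)
  then have "real (card {(a, b, c) \<in> A \<times> A \<times> A. m dvd a + f b c})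
      \<le> (\<Sum>y\<in>A \<times> A. real (card {a \<in> A. m dvd a + f (fst y) (snd y)}))"
    unfolding fibre_def by (simp add: card_cartesian_product flip: of_nat_sum)
  also have "\<dots> \<le> (\<Sum>y\<in>A \<times> A. real k / real_of_int m + 1)"
    unfolding A_def by (intro sum_mono card_congruence_class_le assms)
  also have "\<dots> = real k ^ 2 * (real k / real_of_int m + 1)"
    by (simp add: A_def power2_eq_square)
  finally show ?thesis
    unfolding A_def .
qed

lemma box_count_has_integral_conjugate_le:
  "box_count (has_integral_conjugate L) (int k) \<le>
     (\<Sum>P\<in>pythagorean_primes_upto L. \<Sum>t\<in>sqrt_minus_one_mod (int P ^ 2).
        card {(a, b, c) \<in> {1..int k} \<times> {1..int k} \<times> {1..int k}. int P ^ 2 dvd a + (2 * t * b - c)})"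
proof -
  define E where "E P t = {(a, b, c) \<in> {1..int k} \<times> {1..int k} \<times> {1..int k}.
    int P ^ 2 dvd a + (2 * t * b - c)}" for P t
  have "{(a, b, c) \<in> {1..int k} \<times> {1..int k} \<times> {1..int k}. has_integral_conjugate L a b c}
      \<subseteq> (\<Union>P\<in>pythagorean_primes_upto L. \<Union>t\<in>sqrt_minus_one_mod (int P ^ 2). E P t)"
    using has_integral_conjugate_imp_congruence unfolding E_def by (fastforce simp: add_diff_eq)
  moreover have "finite (E P t)" for P t
    unfolding E_def by (rule finite_subset[of _ "{1..int k} \<times> {1..int k} \<times> {1..int k}"]) auto
  ultimately have "box_count (has_integral_conjugate L) (int k)
      \<le> card (\<Union>P\<in>pythagorean_primes_upto L. \<Union>t\<in>sqrt_minus_one_mod (int P ^ 2). E P t)"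
    unfolding box_count_def
    by (intro card_mono) (simp_all add: finite_sqrt_minus_one_mod finite_pythagorean_primes_upto)
  also have "\<dots> \<le> (\<Sum>P\<in>pythagorean_primes_upto L. \<Sum>t\<in>sqrt_minus_one_mod (int P ^ 2). card (E P t))"
    by (intro order.trans[OF card_UN_le] sum_mono card_UN_le finite_pythagorean_primes_upto
        finite_sqrt_minus_one_mod)
  finally show ?thesis
    unfolding E_def .
qed

lemma prob_conj_le:
  assumes "k > 0"
  shows "prob_conj k L \<le> (\<Sum>P\<in>pythagorean_primes_upto L. 2 / real P ^ 2 + 2 / real k)"
proof -
  define bound where "bound P = real k ^ 2 * (real k / real P ^ 2 + 1)" for P :: nat
  have "real (box_count (has_integral_conjugate L) (int k))
      \<le> (\<Sum>P\<in>pythagorean_primes_upto L. \<Sum>t\<in>sqrt_minus_one_mod (int P ^ 2). bound P)"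
  proof (rule order.trans[OF _ sum_mono[OF sum_mono]])
    show "real (box_count (has_integral_conjugate L) (int k)) \<le> (\<Sum>P\<in>pythagorean_primes_upto L.
        \<Sum>t\<in>sqrt_minus_one_mod (int P ^ 2). real (card {(a, b, c) \<in> {1..int k} \<times> {1..int k} \<times> {1..int k}.
          int P ^ 2 dvd a + (2 * t * b - c)}))"
      using box_count_has_integral_conjugate_le by (simp flip: of_nat_sum)
  next
    fix P t assume "P \<in> pythagorean_primes_upto L"
    then have "int P ^ 2 > 0"
      by (simp add: pythagorean_primes_upto_def prime_gt_0_nat)
    then show "real (card {(a, b, c) \<in> {1..int k} \<times> {1..int k} \<times> {1..int k}.
        int P ^ 2 dvd a + (2 * t * b - c)}) \<le> bound P"
      using card_box_congruence_le[of "int P ^ 2" k "\<lambda>b c. 2 * t * b - c"] by (simp add: bound_def)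
  qed
  also have "\<dots> \<le> (\<Sum>P\<in>pythagorean_primes_upto L. 2 * bound P)"
  proof (intro sum_mono)
    fix P assume "P \<in> pythagorean_primes_upto L"
    then have "prime P" "P mod 4 = 1"
      by (simp_all add: pythagorean_primes_upto_def)
    moreover from this(2) have "odd P"
      by presburger
    ultimately have "card (sqrt_minus_one_mod (int P ^ 2)) \<le> 2"
      by (intro card_sqrt_minus_one_mod_prime_power)
    then show "(\<Sum>t\<in>sqrt_minus_one_mod (int P ^ 2). bound P) \<le> 2 * bound P"
      by (simp add: bound_def mult_right_mono)
  qed
  finally have "prob_conj k L \<le> (\<Sum>P\<in>pythagorean_primes_upto L. 2 * bound P) / real k ^ 3"
    unfolding prob_conj_eq_box_count by (simp add: divide_right_mono)
  also have "\<dots> = (\<Sum>P\<in>pythagorean_primes_upto L. 2 / real P ^ 2 + 2 / real k)"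
    unfolding sum_divide_distrib using assms
    by (intro sum.cong refl) (simp add: bound_def pythagorean_primes_upto_def prime_gt_0_nat
        field_simps power3_eq_cube power2_eq_square)
  finally show ?thesis .
qed

lemma LIMSEQ_prob_conj_le_sum:
  assumes "(\<lambda>k. prob_conj k L) \<longlonglongrightarrow> x"
  shows "x \<le> (\<Sum>P\<in>pythagorean_primes_upto L. 2 / real P ^ 2)"
proof -
  have "(\<lambda>k. \<Sum>P\<in>pythagorean_primes_upto L. 2 / real P ^ 2 + 2 / real k)
      \<longlonglongrightarrow> (\<Sum>P\<in>pythagorean_primes_upto L. 2 / real P ^ 2 + 0)"
    by (intro tendsto_sum tendsto_add tendsto_const lim_const_over_n)
  with assms have "x \<le> (\<Sum>P\<in>pythagorean_primes_upto L. 2 / real P ^ 2 + 0)"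
    by (rule LIMSEQ_le) (auto intro!: exI[of _ 1] prob_conj_le)
  then show ?thesis
    by simp
qed

section \<open>Numerical bounds\<close>

lemma pythagorean_primes_upto_100:
  "pythagorean_primes_upto 100 = {5, 13, 17, 29, 37, 41, 53, 61, 73, 89, 97}"
proof -
  have "pythagorean_primes_upto 100 = set (filter (\<lambda>P. P mod 4 = 1) (primes_upto 100))"
    by (auto simp: pythagorean_primes_upto_def set_primes_upto)
  also have "filter (\<lambda>P. P mod 4 = 1) (primes_upto 100) = [5, 13, 17, 29, 37, 41, 53, 61, 73, 89, 97]"
    by code_simp
  finally show ?thesis
    by simp
qed

lemma sum_tail_inverse_square_4m_plus_1_le:
  "(\<Sum>m\<in>{25..N}. 2 / (4 * real m + 1) ^ 2) \<le> 1 / 198"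
proof (cases "N < 25")
  case True
  then show ?thesis by simp
next
  case False
  define h where "h m = - 1 / (2 * (4 * real m + 3))" for m :: nat
  have "(\<Sum>m\<in>{Suc 24..N}. 2 / (4 * real m + 1) ^ 2) \<le> (\<Sum>m\<in>{Suc 24..N}. h m - h (m - 1))"
  proof (intro sum_mono)
    fix m assume "m \<in> {Suc 24..N}"
    then have m: "real (m - 1) = real m - 1" "real m \<ge> 25"
      by auto
    have "0 < (4 * real m - 1) * (4 * real m + 3)"
      using m by (intro mult_pos_pos) auto
    moreover have "(4 * real m - 1) * (4 * real m + 3) \<le> (4 * real m + 1) ^ 2"
      by (simp add: power2_eq_square algebra_simps)
    ultimately have "2 / (4 * real m + 1) ^ 2 \<le> 2 / ((4 * real m - 1) * (4 * real m + 3))"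
      by (intro divide_left_mono) auto
    also have "\<dots> = 1 / (2 * (4 * real m - 1)) - 1 / (2 * (4 * real m + 3))"
    proof -
      define a where "a = 4 * real m - 1"
      have "a > 0" "4 * real m + 3 = a + 4"
        using m by (simp_all add: a_def)
      then show ?thesis
        unfolding a_def[symmetric] by (simp add: divide_simps)
    qed
    also have "\<dots> = h m - h (m - 1)"
      using m by (simp add: h_def algebra_simps)
    finally show "2 / (4 * real m + 1) ^ 2 \<le> h m - h (m - 1)" .
  qed
  also have "\<dots> = h N - h 24"
    using False by (intro sum_telescope'') simp
  also have "\<dots> \<le> 1 / 198"
    by (simp add: h_def)
  finally show ?thesis
    by simp
qed

lemma sum_pythagorean_primes_le:
  "(\<Sum>P\<in>pythagorean_primes_upto L. 2 / real P ^ 2) \<le> 111 / 1000"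
proof -
  define g where "g P = 2 / real P ^ 2" for P :: nat
  define A where "A = pythagorean_primes_upto 100"
  define T where "T = (\<lambda>m. 4 * m + 1) ` {25..L}"
  have "pythagorean_primes_upto L - A \<subseteq> T"
  proof
    fix P assume P: "P \<in> pythagorean_primes_upto L - A"
    then have P4: "P mod 4 = 1" "P \<le> L" "\<not> P \<le> 100"
      by (auto simp: A_def pythagorean_primes_upto_def)
    have "P = 4 * (P div 4) + 1"
      using P4(1) div_mult_mod_eq[of P 4] by simp
    moreover have "100 div 4 \<le> P div 4" "P div 4 \<le> L"
      using P4(2,3) div_le_dividend[of P 4] by (simp_all add: div_le_mono)
    ultimately show "P \<in> T"
      unfolding T_def by (intro image_eqI[of _ _ "P div 4"]) auto
  qed
  then have "(\<Sum>P\<in>pythagorean_primes_upto L - A. g P) \<le> (\<Sum>P\<in>T. g P)"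
    by (intro sum_mono2) (simp_all add: T_def g_def)
  also have "\<dots> = (\<Sum>m\<in>{25..L}. 2 / (4 * real m + 1) ^ 2)"
    unfolding T_def g_def by (subst sum.reindex) (auto simp: inj_on_def add.commute)
  finally have tail: "(\<Sum>P\<in>pythagorean_primes_upto L - A. g P) \<le> 1 / 198"
    using sum_tail_inverse_square_4m_plus_1_le[of L] by linarith
  have "(\<Sum>P\<in>pythagorean_primes_upto L \<inter> A. g P) \<le> (\<Sum>P\<in>A. g P)"
    by (intro sum_mono2) (simp_all add: A_def g_def finite_pythagorean_primes_upto)
  also have "\<dots> = 2/25 + 2/169 + 2/289 + 2/841 + 2/1369 + 2/1681 + 2/2809 + 2/3721 + 2/5329
      + 2/7921 + 2/9409"
    by (simp add: A_def g_def pythagorean_primes_upto_100)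
  finally have "(\<Sum>P\<in>pythagorean_primes_upto L \<inter> A. g P) \<le> 111 / 1000 - 1 / 198"
    by simp
  moreover have "(\<Sum>P\<in>pythagorean_primes_upto L. g P)
      = (\<Sum>P\<in>pythagorean_primes_upto L \<inter> A. g P) + (\<Sum>P\<in>pythagorean_primes_upto L - A. g P)"
    by (rule sum.Int_Diff[OF finite_pythagorean_primes_upto])
  ultimately show ?thesis
    using tail by (simp add: g_def)
qed

lemma catalan_ge: "catalan \<ge> 0.915"
proof -
  define f where "f i = (-1::real) ^ i / (2 * real i + 1) ^ 2" for i
  have "summable f"
  proof (rule summable_comparison_test'[OF inverse_power_summable[of 2]])
    fix n :: nat assume "n \<ge> 1"
    then show "norm (f n) \<le> inverse (real n ^ 2)"
      by (simp add: f_def abs_mult field_simps power_mono)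
  qed simp
  then have grouped: "(\<lambda>n. sum f {n * 2..<n * 2 + 2}) sums catalan"
    unfolding catalan_def f_def[symmetric] by (intro sums_group summable_sums) simp_all
  have "sum f {n * 2..<n * 2 + 2} = 1 / (4 * real n + 1) ^ 2 - 1 / (4 * real n + 3) ^ 2" for n
  proof -
    have "{n * 2..<n * 2 + 2} = {2 * n, 2 * n + 1}"
      by auto
    then show ?thesis
      by (simp add: f_def algebra_simps)
  qed
  moreover have "1 / (4 * real n + 3) ^ 2 \<le> 1 / (4 * real n + 1) ^ 2" for n
    by (intro divide_left_mono power_mono) auto
  ultimately have nonneg: "0 \<le> sum f {n * 2..<n * 2 + 2}" for n
    by simp
  have "(\<Sum>n<6. sum f {n * 2..<n * 2 + 2}) \<le> (\<Sum>n. sum f {n * 2..<n * 2 + 2})"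
    by (rule sum_le_suminf) (use grouped nonneg in \<open>auto simp: sums_iff\<close>)
  also have "\<dots> = catalan"
    using grouped by (simp add: sums_iff)
  also have "(\<Sum>n<6. sum f {n * 2..<n * 2 + 2}) = (\<Sum>i<12. f i)"
    using sum.nat_group[of f 2 6] by simp
  finally show ?thesis
    by (simp add: f_def eval_nat_numeral)
qed

lemma catalan_constant_bound: "111 / 1000 \<le> 12 * catalan / pi ^ 2 - 1"
proof -
  have "pi ^ 2 \<le> 3.1415926535899 ^ 2"
    using pi_approx pi_gt_zero by (intro power_mono) auto
  moreover have "(3.1415926535899::real) ^ 2 \<le> 9.8697"
    by (simp add: field_simps)
  ultimately have "pi ^ 2 \<le> 9.8697"
    by linarith
  then have "12 * 0.915 / 9.8697 \<le> 12 * catalan / pi ^ 2"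
    using catalan_ge by (intro frac_le) auto
  then show ?thesis
    by simp
qed

theorem proposition3p7:
  shows "\<exists>f :: nat \<Rightarrow> real.
           (\<forall>L. (\<lambda>k. prob_conj k L) \<longlonglongrightarrow> f L) \<and>
           convergent f \<and>
           lim f \<le> 12 * catalan / pi ^ 2 - 1"
proof -
  define f where "f L = real (box_count (has_integral_conjugate L) (int (fact L ^ 2))) / real (fact L ^ 2) ^ 3"
    for L
  have lim: "(\<lambda>k. prob_conj k L) \<longlonglongrightarrow> f L" for L
    unfolding f_def by (rule LIMSEQ_prob_conj)
  have "incseq f"
    using LIMSEQ_le[OF lim lim] prob_conj_mono by (auto simp: incseq_def)
  moreover have bound: "f L \<le> 111 / 1000" for L
    using LIMSEQ_prob_conj_le_sum[OF lim[of L]] sum_pythagorean_primes_le[of L] by linarith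
  ultimately obtain l where l: "f \<longlonglongrightarrow> l"
    using incseq_convergent by blast
  have "l \<le> 111 / 1000"
    by (rule Lim_bounded[OF l, of 0]) (blast intro: bound)
  show ?thesis
  proof (intro exI[of _ f] conjI allI)
    show "(\<lambda>k. prob_conj k L) \<longlonglongrightarrow> f L" for L
      by (rule lim)
    show "convergent f"
      using l by (rule convergentI)
    show "lim f \<le> 12 * catalan / pi ^ 2 - 1"
      using l \<open>l \<le> 111 / 1000\<close> catalan_constant_bound by (simp add: limI)
  qed
qed

end
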